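(* Let $A_1,\dots,A_n$ be independent events with probabilities $p_1,\dots,p_n\in(0,1)$ and let $r_1,\dots,r_n\ge0$ satisfy $\sum_{i\in S} r_i+\prod_{i\in S}(1-p_i)\le 1$ for every $S\subseteq\{1,\dots,n\}$. Suppose this inequality holds with equality for some set $S_0$. Then there is a probability distribution over permutations $\pi$ of $\{1,\dots,n\}$ (chosen independently of the events) such that $\Pr(A_i$ occurs and no $A_j$ with $j$ preceding $i$ in $\pi$ occurs$)\ge r_i$ for every $i$, and such that every permutation with positive probability places all elements of $S_0$ before all elements outside $S_0$. *)

theory Defs
  imports "HOL-Probability.Probability" "HOL-Combinatorics.Permutations"
begin

text \<open>A permutation of {1..n} is encoded by its position function \<sigma> (\<sigma> permutes {1..n});
  j precedes i in \<sigma> iff \<sigma> j < \<sigma> i.\<close>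
definition first_event :: "nat \<Rightarrow> (nat \<Rightarrow> 'a set) \<Rightarrow> (nat \<Rightarrow> nat) \<Rightarrow> nat \<Rightarrow> 'a set" where
  "first_event n A \<sigma> i = A i - (\<Union>j\<in>{j\<in>{1..n}. \<sigma> j < \<sigma> i}. A j)"

end

theory Submission
  imports Defs
begin

(* Write N = {1..n} and f(S) = Pr(\<Union>j\<in>S. A j).  For a linear order \<sigma> of N, the
   probability that A i occurs while no predecessor of i does is the marginal value
   f(P \<union> {i}) - f(P), P being the set of predecessors of i in \<sigma>.  By independence
   f(S) = 1 - \<Prod>i\<in>S. (1 - p i), so the hypotheses say that r lies in the polymatroid
   {y. \<forall>S \<subseteq> N. y(S) \<le> f(S)} of the submodular function f and that S0 is tight for r.
   The rest is polyhedral combinatorics of set functions, developed in this order: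
    1. along a tight set T a base of f splits into a base of f restricted to T and a base of
       the contraction of f by T; concatenating orders of the two parts puts T first;
    2. every point of the base polytope of any set function with f {} = 0 is the expected
       marginal vector of a random order (induction on |N|: split along a proper tight set,
       or write the point as a mixture of two bases that have one);
    3. for submodular f, every point of the polymatroid is dominated by a base (raise the
       coordinates one by one; tight sets are closed under union).
   Since S0 is tight for r \<le> x it is tight for the base x, so 1 and 2 give a random order with
   S0 first and expected marginals x \<ge> r; finally orders are renamed to permutations of {1..n}. *)

section \<open>Marginal vectors, bases and random orders\<close>

text \<open>A linear order of N is encoded by an injective key function \<sigma> (j precedes i iff
  \<sigma> j < \<sigma> i).  The marginal value of i is the increase of f when i joins its predecessors.\<close>
definition marginal :: "(nat set \<Rightarrow> real) \<Rightarrow> nat set \<Rightarrow> (nat \<Rightarrow> nat) \<Rightarrow> nat \<Rightarrow> real" where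
  "marginal f N \<sigma> i = f (insert i {j\<in>N. \<sigma> j < \<sigma> i}) - f {j\<in>N. \<sigma> j < \<sigma> i}"

definition in_base :: "(nat set \<Rightarrow> real) \<Rightarrow> nat set \<Rightarrow> (nat \<Rightarrow> real) \<Rightarrow> bool" where
  "in_base f N x \<longleftrightarrow> (\<forall>S\<subseteq>N. sum x S \<le> f S) \<and> sum x N = f N"

definition has_proper_tight_set :: "(nat set \<Rightarrow> real) \<Rightarrow> nat set \<Rightarrow> (nat \<Rightarrow> real) \<Rightarrow> bool" where
  "has_proper_tight_set f N x \<longleftrightarrow> (\<exists>T. T \<subseteq> N \<and> T \<noteq> {} \<and> T \<noteq> N \<and> sum x T = f T)"

definition contraction :: "(nat set \<Rightarrow> real) \<Rightarrow> nat set \<Rightarrow> nat set \<Rightarrow> real" where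
  "contraction f T S = f (S \<union> T) - f T"

definition marginal_mixture :: "(nat set \<Rightarrow> real) \<Rightarrow> nat set \<Rightarrow> (nat \<Rightarrow> real) \<Rightarrow> (nat \<Rightarrow> nat) pmf \<Rightarrow> bool" where
  "marginal_mixture f N x D \<longleftrightarrow> finite (set_pmf D) \<and> (\<forall>\<sigma>\<in>set_pmf D. inj_on \<sigma> N) \<and>
     (\<forall>i\<in>N. measure_pmf.expectation D (\<lambda>\<sigma>. marginal f N \<sigma> i) = x i)"

lemma marginal_mixture_cong:
  "marginal_mixture f N y D \<Longrightarrow> (\<And>k. k \<in> N \<Longrightarrow> y k = x k) \<Longrightarrow> marginal_mixture f N x D"
  by (simp add: marginal_mixture_def)

lemma marginal_mixture_mix:
  assumes "marginal_mixture f N y1 D1" "marginal_mixture f N y2 D2" "0 \<le> l" "l \<le> 1"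
  shows "marginal_mixture f N (\<lambda>k. l * y1 k + (1 - l) * y2 k)
           (bernoulli_pmf l \<bind> (\<lambda>b. if b then D1 else D2))"
  unfolding marginal_mixture_def
proof (intro conjI ballI)
  show "finite (set_pmf (bernoulli_pmf l \<bind> (\<lambda>b. if b then D1 else D2)))"
    using assms by (auto simp: marginal_mixture_def)
next
  fix \<sigma> assume "\<sigma> \<in> set_pmf (bernoulli_pmf l \<bind> (\<lambda>b. if b then D1 else D2))"
  then show "inj_on \<sigma> N" using assms by (auto simp: marginal_mixture_def split: if_splits)
next
  fix i assume i: "i \<in> N"
  have "measure_pmf.expectation (bernoulli_pmf l \<bind> (\<lambda>b. if b then D1 else D2)) (\<lambda>\<sigma>. marginal f N \<sigma> i)
     = (\<Sum>b\<in>UNIV. pmf (bernoulli_pmf l) b *\<^sub>R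
          measure_pmf.expectation (if b then D1 else D2) (\<lambda>\<sigma>. marginal f N \<sigma> i))"
    using assms by (intro pmf_expectation_bind) (auto simp: marginal_mixture_def)
  also have "\<dots> = l * y1 i + (1 - l) * y2 i"
    using assms i by (simp add: UNIV_bool marginal_mixture_def)
  finally show "measure_pmf.expectation (bernoulli_pmf l \<bind> (\<lambda>b. if b then D1 else D2))
      (\<lambda>\<sigma>. marginal f N \<sigma> i) = l * y1 i + (1 - l) * y2 i" .
qed

section \<open>Concatenating orders along a tight set\<close>

definition concat_order :: "nat set \<Rightarrow> (nat \<Rightarrow> nat) \<Rightarrow> (nat \<Rightarrow> nat) \<Rightarrow> nat \<Rightarrow> nat" where
  "concat_order T a b k = (if k \<in> T then a k else b k + Suc (\<Sum>t\<in>T. a t))"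

lemma concat_order_first:
  "finite T \<Longrightarrow> i \<in> T \<Longrightarrow> j \<notin> T \<Longrightarrow> concat_order T a b i < concat_order T a b j"
  using member_le_sum[of i T a] by (simp add: concat_order_def)

lemma concat_order_predecessors_inside:
  assumes "finite T" "T \<subseteq> N" "i \<in> T"
  shows "{j\<in>N. concat_order T a b j < concat_order T a b i} = {j\<in>T. a j < a i}"
  using member_le_sum[of i T a] assms by (auto simp: concat_order_def)

lemma concat_order_predecessors_outside:
  assumes "finite T" "T \<subseteq> N" "i \<in> N - T"
  shows "{j\<in>N. concat_order T a b j < concat_order T a b i} = T \<union> {j\<in>N-T. b j < b i}"
  using member_le_sum[of _ T a] assms by (force simp: concat_order_def)

lemma concat_order_inj:
  assumes "finite T" "inj_on a T" "inj_on b (N - T)"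
  shows "inj_on (concat_order T a b) N"
proof (rule inj_onI)
  fix x y assume xy: "x \<in> N" "y \<in> N" "concat_order T a b x = concat_order T a b y"
  consider "x \<in> T" "y \<in> T" | "x \<notin> T" "y \<notin> T" | "x \<in> T \<longleftrightarrow> y \<notin> T" by blast
  then show "x = y"
  proof cases
    case 3
    then show ?thesis
      using xy concat_order_first[OF assms(1), of x y a b] concat_order_first[OF assms(1), of y x a b]
      by auto
  qed (use xy assms in \<open>auto simp: concat_order_def inj_on_def\<close>)
qed

lemma marginal_concat_order_inside:
  assumes "finite T" "T \<subseteq> N" "i \<in> T"
  shows "marginal f N (concat_order T a b) i = marginal f T a i"
  unfolding marginal_def concat_order_predecessors_inside[OF assms] ..

lemma marginal_concat_order_outside:
  assumes "finite T" "T \<subseteq> N" "i \<in> N - T"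
  shows "marginal f N (concat_order T a b) i = marginal (contraction f T) (N - T) b i"
proof -
  have "insert i {j\<in>N-T. b j < b i} \<union> T = insert i (T \<union> {j\<in>N-T. b j < b i})"
       "{j\<in>N-T. b j < b i} \<union> T = T \<union> {j\<in>N-T. b j < b i}" by auto
  then show ?thesis
    unfolding marginal_def contraction_def concat_order_predecessors_outside[OF assms] by simp
qed

lemma marginal_mixture_concat:
  assumes "finite N" "T \<subseteq> N" "marginal_mixture f T x D1"
    "marginal_mixture (contraction f T) (N - T) x D2"
  shows "\<exists>D. marginal_mixture f N x D \<and> (\<forall>\<sigma>\<in>set_pmf D. \<forall>i\<in>T. \<forall>j\<in>N-T. \<sigma> i < \<sigma> j)"
proof -
  have fT: "finite T" using assms finite_subset by blast
  define D where "D = map_pmf (\<lambda>z. concat_order T (fst z) (snd z)) (pair_pmf D1 D2)"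
  have "marginal_mixture f N x D"
    unfolding marginal_mixture_def
  proof (intro conjI ballI)
    show "finite (set_pmf D)" using assms by (simp add: D_def marginal_mixture_def)
  next
    fix \<sigma> assume "\<sigma> \<in> set_pmf D"
    then show "inj_on \<sigma> N"
      using assms fT by (auto simp: D_def marginal_mixture_def intro!: concat_order_inj)
  next
    fix i assume i: "i \<in> N"
    show "measure_pmf.expectation D (\<lambda>\<sigma>. marginal f N \<sigma> i) = x i"
    proof (cases "i \<in> T")
      case True
      have "measure_pmf.expectation D (\<lambda>\<sigma>. marginal f N \<sigma> i) =
          measure_pmf.expectation (pair_pmf D1 D2) (\<lambda>z. marginal f T (fst z) i)"
        unfolding D_def integral_map_pmf using marginal_concat_order_inside[OF fT assms(2) True] by simp
      also have "\<dots> = x i"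
        using assms(3) True expectation_pair_pmf_fst[of D1 D2 "\<lambda>\<sigma>. marginal f T \<sigma> i"]
        by (simp add: marginal_mixture_def)
      finally show ?thesis .
    next
      case False
      have "measure_pmf.expectation D (\<lambda>\<sigma>. marginal f N \<sigma> i) =
          measure_pmf.expectation (pair_pmf D1 D2) (\<lambda>z. marginal (contraction f T) (N - T) (snd z) i)"
        unfolding D_def integral_map_pmf using marginal_concat_order_outside[OF fT assms(2)] i False
        by simp
      also have "\<dots> = x i"
        using assms(4) i False
          expectation_pair_pmf_snd[of D1 D2 "\<lambda>\<sigma>. marginal (contraction f T) (N - T) \<sigma> i"]
        by (simp add: marginal_mixture_def)
      finally show ?thesis .
    qed
  qed
  moreover have "\<forall>\<sigma>\<in>set_pmf D. \<forall>i\<in>T. \<forall>j\<in>N-T. \<sigma> i < \<sigma> j"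
    using concat_order_first[OF fT] by (auto simp: D_def)
  ultimately show ?thesis by blast
qed

lemma in_base_restrict:
  "in_base f N y \<Longrightarrow> T \<subseteq> N \<Longrightarrow> sum y T = f T \<Longrightarrow> in_base f T y"
  by (auto simp: in_base_def)

lemma in_base_contract:
  assumes "finite N" "in_base f N y" "T \<subseteq> N" "sum y T = f T"
  shows "in_base (contraction f T) (N - T) y"
  unfolding in_base_def contraction_def
proof (intro conjI allI impI)
  have fT: "finite T" using assms finite_subset by blast
  fix S assume S: "S \<subseteq> N - T"
  then have "sum y (S \<union> T) = sum y S + sum y T"
    using fT assms(1) finite_subset by (intro sum.union_disjoint) auto
  moreover have "S \<union> T \<subseteq> N" using S assms(3) by auto
  then have "sum y (S \<union> T) \<le> f (S \<union> T)" using assms(2) by (simp add: in_base_def)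
  ultimately show "sum y S \<le> f (S \<union> T) - f T" using assms by simp
next
  have "sum y N = sum y (N - T) + sum y T"
    using assms by (metis finite_subset sum.subset_diff)
  moreover have "(N - T) \<union> T = N" using assms by auto
  ultimately show "sum y (N - T) = f ((N - T) \<union> T) - f T" using assms by (simp add: in_base_def)
qed

section \<open>Every base is an expected marginal vector\<close>

definition transfer :: "(nat \<Rightarrow> real) \<Rightarrow> nat \<Rightarrow> nat \<Rightarrow> real \<Rightarrow> nat \<Rightarrow> real" where
  "transfer x a b t k = x k + (if k = a then t else 0) - (if k = b then t else 0)"

lemma sum_transfer:
  "finite S \<Longrightarrow> sum (transfer x a b t) S = sum x S + (if a \<in> S then t else 0) - (if b \<in> S then t else 0)"
  by (simp add: transfer_def sum.distrib sum_subtractf)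

text \<open>A base without proper tight sets can be moved in any exchange direction a - b by a
  positive amount until a proper tight set appears: the largest admissible step is the
  least slack of the sets containing a but not b.\<close>
lemma base_exchange:
  assumes fN: "finite N" and x: "in_base f N x" and ab: "a \<in> N" "b \<in> N" "a \<noteq> b"
    and no_tight: "\<not> has_proper_tight_set f N x"
  shows "\<exists>t>0. in_base f N (transfer x a b t) \<and> has_proper_tight_set f N (transfer x a b t)"
proof -
  define C where "C = {S. S \<subseteq> N \<and> a \<in> S \<and> b \<notin> S}"
  have finC: "finite C" unfolding C_def using fN by (auto intro: finite_subset[of _ "Pow N"])
  have "{a} \<in> C" using ab by (auto simp: C_def)
  define t where "t = Min ((\<lambda>S. f S - sum x S) ` C)"
  have "t \<in> (\<lambda>S. f S - sum x S) ` C" unfolding t_def using finC \<open>{a} \<in> C\<close> by (intro Min_in) auto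
  then obtain T where T: "T \<in> C" "t = f T - sum x T" by auto
  have t_le: "t \<le> f S - sum x S" if "S \<in> C" for S unfolding t_def using finC that by (intro Min_le) auto
  have T_proper: "T \<subseteq> N" "T \<noteq> {}" "T \<noteq> N" using T ab by (auto simp: C_def)
  then have "sum x T \<le> f T" "sum x T \<noteq> f T"
    using x no_tight unfolding in_base_def has_proper_tight_set_def by blast+
  then have t_pos: "t > 0" using T by simp
  have sum_z: "sum (transfer x a b t) S = sum x S + (if a \<in> S then t else 0) - (if b \<in> S then t else 0)"
    if "S \<subseteq> N" for S using finite_subset[OF that fN] by (rule sum_transfer)
  have "in_base f N (transfer x a b t)"
    unfolding in_base_def
  proof (intro conjI allI impI)
    fix S assume S: "S \<subseteq> N"
    show "sum (transfer x a b t) S \<le> f S"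
    proof (cases "S \<in> C")
      case True
      then show ?thesis using t_le[of S] sum_z[OF S] by (simp add: C_def)
    next
      case False
      then show ?thesis using sum_z[OF S] S x t_pos by (auto simp: C_def in_base_def)
    qed
  next
    show "sum (transfer x a b t) N = f N" using sum_z[of N] ab x by (simp add: in_base_def)
  qed
  moreover have "sum (transfer x a b t) T = f T" using sum_z[OF T_proper(1)] T by (auto simp: C_def)
  ultimately show ?thesis using t_pos T_proper unfolding has_proper_tight_set_def by blast
qed

lemma base_two_point_mixture:
  assumes "finite N" "in_base f N x" "\<not> has_proper_tight_set f N x" "i \<in> N" "j \<in> N" "i \<noteq> j"
  obtains y1 y2 l where "in_base f N y1" "has_proper_tight_set f N y1"
    "in_base f N y2" "has_proper_tight_set f N y2"
    "0 \<le> l" "l \<le> 1" "\<And>k. l * y1 k + (1 - l) * y2 k = x k"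
proof -
  obtain t1 where t1: "t1 > 0" "in_base f N (transfer x i j t1)"
    "has_proper_tight_set f N (transfer x i j t1)"
    using base_exchange[OF assms(1,2,4,5,6,3)] by blast
  obtain t2 where t2: "t2 > 0" "in_base f N (transfer x j i t2)"
    "has_proper_tight_set f N (transfer x j i t2)"
    using base_exchange[OF assms(1,2) assms(5,4) assms(6)[symmetric] assms(3)] by blast
  define l where "l = t2 / (t1 + t2)"
  have l: "0 \<le> l" "l \<le> 1" using t1 t2 by (auto simp: l_def field_simps)
  have balance: "l * t1 = (1 - l) * t2" using t1(1) t2(1) by (simp add: l_def field_simps)
  have "l * transfer x i j t1 k + (1 - l) * transfer x j i t2 k = x k" for k
    using balance \<open>i \<noteq> j\<close> by (auto simp: transfer_def algebra_simps)
  then show ?thesis using that t1 t2 l by blast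
qed

lemma marginal_mixture_small:
  assumes "finite N" "card N \<le> 1" "f {} = 0" "in_base f N x"
  shows "\<exists>D. marginal_mixture f N x D"
proof -
  have "N = {} \<or> (\<exists>a. N = {a})"
  proof (cases "card N = 0")
    case False
    then have "card N = 1" using assms(2) by linarith
    then show ?thesis by (metis One_nat_def card_1_singleton_iff)
  qed (use assms(1) in simp)
  then show ?thesis
  proof
    assume "N = {}"
    then show ?thesis by (intro exI[of _ "return_pmf (\<lambda>_. 0)"]) (simp add: marginal_mixture_def)
  next
    assume "\<exists>a. N = {a}"
    then obtain a where a: "N = {a}" ..
    have "x a = f {a}" using assms(4) by (simp add: a in_base_def)
    then show ?thesis using assms(3)
      by (intro exI[of _ "return_pmf (\<lambda>_. 0)"]) (simp add: a marginal_mixture_def marginal_def)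
  qed
qed

text \<open>Induction on |N|: a proper tight set splits the problem
  into a restriction and a contraction; otherwise the point is a mixture of two bases that
  have proper tight sets.\<close>
lemma base_is_marginal_mixture:
  assumes "finite N" "f {} = 0" "in_base f N x"
  shows "\<exists>D. marginal_mixture f N x D"
  using assms
proof (induction "card N" arbitrary: N f x rule: less_induct)
  case less
  have split: "\<exists>D. marginal_mixture f N y D"
    if y: "in_base f N y" and tight: "has_proper_tight_set f N y" for y
  proof -
    obtain T where T: "T \<subseteq> N" "T \<noteq> {}" "T \<noteq> N" "sum y T = f T"
      using tight by (auto simp: has_proper_tight_set_def)
    have fT: "finite T" using T less.prems finite_subset by blast
    have smaller: "card T < card N" "card (N - T) < card N"
      using T less.prems by (auto intro: psubset_card_mono)
    obtain D1 where D1: "marginal_mixture f T y D1"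
      using less.hyps[OF smaller(1) fT less.prems(2) in_base_restrict[OF y T(1,4)]] by blast
    have "contraction f T {} = 0" by (simp add: contraction_def)
    then obtain D2 where D2: "marginal_mixture (contraction f T) (N - T) y D2"
      using less.hyps[OF smaller(2) _ _ in_base_contract[OF less.prems(1) y T(1,4)]] less.prems(1)
      by blast
    from D1 D2 show ?thesis using marginal_mixture_concat[OF less.prems(1) T(1)] by blast
  qed
  consider "has_proper_tight_set f N x" | "card N \<le> 1"
    | i j where "\<not> has_proper_tight_set f N x" "i \<in> N" "j \<in> N" "i \<noteq> j"
    using card_le_Suc0_iff_eq[OF less.prems(1)] by fastforce
  then show ?case
  proof cases
    case 1
    then show ?thesis using split less.prems by blast
  next
    case 2
    then show ?thesis using marginal_mixture_small less.prems by blast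
  next
    case (3 i j)
    obtain y1 y2 l where y: "in_base f N y1" "has_proper_tight_set f N y1"
      "in_base f N y2" "has_proper_tight_set f N y2" "0 \<le> l" "l \<le> 1"
      "\<And>k. l * y1 k + (1 - l) * y2 k = x k"
      using base_two_point_mixture[OF less.prems(1,3) 3] by blast
    obtain D1 D2 where "marginal_mixture f N y1 D1" "marginal_mixture f N y2 D2"
      using split y by blast
    then show ?thesis using marginal_mixture_cong[OF marginal_mixture_mix] y(5-7) by blast
  qed
qed

lemma tight_set_first_mixture:
  assumes "finite N" "f {} = 0" "in_base f N x" "T \<subseteq> N" "sum x T = f T"
  shows "\<exists>D. marginal_mixture f N x D \<and> (\<forall>\<sigma>\<in>set_pmf D. \<forall>i\<in>T. \<forall>j\<in>N-T. \<sigma> i < \<sigma> j)"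
proof -
  have fin: "finite T" "finite (N - T)" and "contraction f T {} = 0"
    using finite_subset[OF assms(4,1)] assms(1) by (simp_all add: contraction_def)
  obtain D1 where D1: "marginal_mixture f T x D1"
    using base_is_marginal_mixture[OF fin(1) assms(2) in_base_restrict[OF assms(3-5)]] by blast
  obtain D2 where D2: "marginal_mixture (contraction f T) (N - T) x D2"
    using base_is_marginal_mixture[OF fin(2) \<open>contraction f T {} = 0\<close>
        in_base_contract[OF assms(1,3-5)]] by blast
  show ?thesis by (rule marginal_mixture_concat[OF assms(1,4) D1 D2])
qed

section \<open>Raising a point of a polymatroid to a base\<close>

definition in_polymatroid :: "(nat set \<Rightarrow> real) \<Rightarrow> nat set \<Rightarrow> (nat \<Rightarrow> real) \<Rightarrow> bool" where
  "in_polymatroid f N x \<longleftrightarrow> (\<forall>S\<subseteq>N. sum x S \<le> f S)"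

definition submodular_on :: "nat set \<Rightarrow> (nat set \<Rightarrow> real) \<Rightarrow> bool" where
  "submodular_on N f \<longleftrightarrow> (\<forall>S T. S \<subseteq> N \<longrightarrow> T \<subseteq> N \<longrightarrow> f (S \<union> T) + f (S \<inter> T) \<le> f S + f T)"

text \<open>Raising coordinate a by the least slack of the sets containing a keeps the point in
  the polymatroid and makes some set containing a tight.\<close>
lemma polymatroid_raise:
  assumes fN: "finite N" and x: "in_polymatroid f N x" and a: "a \<in> N"
  obtains d where "d \<ge> 0" "in_polymatroid f N (\<lambda>k. x k + (if k = a then d else 0))"
    "\<exists>S\<subseteq>N. a \<in> S \<and> sum (\<lambda>k. x k + (if k = a then d else 0)) S = f S"
proof -
  define C where "C = {S. S \<subseteq> N \<and> a \<in> S}"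
  have finC: "finite C" unfolding C_def using fN by (auto intro: finite_subset[of _ "Pow N"])
  have "{a} \<in> C" using a by (auto simp: C_def)
  define d where "d = Min ((\<lambda>S. f S - sum x S) ` C)"
  have "d \<in> (\<lambda>S. f S - sum x S) ` C" unfolding d_def using finC \<open>{a} \<in> C\<close> by (intro Min_in) auto
  then obtain T where T: "T \<in> C" "d = f T - sum x T" by auto
  have d_le: "d \<le> f S - sum x S" if "S \<in> C" for S unfolding d_def using finC that by (intro Min_le) auto
  have d_nonneg: "d \<ge> 0" using T x by (auto simp: C_def in_polymatroid_def)
  define y where "y = (\<lambda>k. x k + (if k = a then d else 0))"
  have sum_y: "sum y S = sum x S + (if a \<in> S then d else 0)" if "S \<subseteq> N" for S
  proof -
    have "finite S" using fN that by (rule finite_subset[rotated])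
    then show ?thesis by (simp add: y_def sum.distrib)
  qed
  have "in_polymatroid f N y"
    unfolding in_polymatroid_def
  proof (intro allI impI)
    fix S assume S: "S \<subseteq> N"
    show "sum y S \<le> f S"
    proof (cases "a \<in> S")
      case True
      then show ?thesis using d_le[of S] sum_y[OF S] S by (simp add: C_def)
    next
      case False
      then show ?thesis using sum_y[OF S] x S by (simp add: in_polymatroid_def)
    qed
  qed
  moreover have "sum y T = f T" using sum_y[of T] T by (auto simp: C_def)
  moreover have "T \<subseteq> N" "a \<in> T" using T(1) by (auto simp: C_def)
  ultimately show ?thesis using that[OF d_nonneg] unfolding y_def by blast
qed

lemma polymatroid_raise_all:
  assumes fN: "finite N" and r: "in_polymatroid f N r"
  shows "\<exists>x. in_polymatroid f N x \<and> (\<forall>i. r i \<le> x i) \<and> (\<forall>i\<in>N. \<exists>S\<subseteq>N. i \<in> S \<and> sum x S = f S)"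
proof -
  have "\<exists>x. in_polymatroid f N x \<and> (\<forall>i. r i \<le> x i) \<and> (\<forall>i\<in>K. \<exists>S\<subseteq>N. i \<in> S \<and> sum x S = f S)"
    if "finite K" "K \<subseteq> N" for K
    using that
  proof (induction K rule: finite_induct)
    case empty
    show ?case using r by auto
  next
    case (insert a K)
    then obtain x where x: "in_polymatroid f N x" "\<forall>i. r i \<le> x i"
      "\<forall>i\<in>K. \<exists>S\<subseteq>N. i \<in> S \<and> sum x S = f S" by auto
    obtain d where d: "d \<ge> 0" and y: "in_polymatroid f N (\<lambda>k. x k + (if k = a then d else 0))"
      and tight_a: "\<exists>S\<subseteq>N. a \<in> S \<and> sum (\<lambda>k. x k + (if k = a then d else 0)) S = f S"
      using polymatroid_raise[OF fN x(1)] insert.prems by blast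
    have "\<exists>S\<subseteq>N. i \<in> S \<and> sum (\<lambda>k. x k + (if k = a then d else 0)) S = f S" if "i \<in> K" for i
    proof -
      obtain S where S: "S \<subseteq> N" "i \<in> S" "sum x S = f S" using x(3) \<open>i \<in> K\<close> by blast
      have "sum x S \<le> sum (\<lambda>k. x k + (if k = a then d else 0)) S" using d by (intro sum_mono) auto
      moreover have "sum (\<lambda>k. x k + (if k = a then d else 0)) S \<le> f S"
        using y S(1) by (simp add: in_polymatroid_def)
      ultimately show ?thesis using S by (intro exI[of _ S]) auto
    qed
    moreover have "\<forall>i. r i \<le> x i + (if i = a then d else 0)" using x(2) d by (simp add: add_increasing2)
    ultimately show ?case using y tight_a by (intro exI[of _ "\<lambda>k. x k + (if k = a then d else 0)"]) auto
  qed
  from this[OF fN order_refl] show ?thesis .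
qed

lemma tight_union:
  assumes fN: "finite N" and x: "in_polymatroid f N x" and sub: "submodular_on N f"
    and ST: "S \<subseteq> N" "T \<subseteq> N" "sum x S = f S" "sum x T = f T"
  shows "sum x (S \<union> T) = f (S \<union> T)"
proof -
  have "finite S" "finite T" using ST fN finite_subset by auto
  then have "sum x (S \<union> T) + sum x (S \<inter> T) = sum x S + sum x T" by (rule sum.union_inter)
  moreover have "S \<union> T \<subseteq> N" "S \<inter> T \<subseteq> N" using ST by auto
  then have "sum x (S \<union> T) \<le> f (S \<union> T)" "sum x (S \<inter> T) \<le> f (S \<inter> T)"
    using x by (simp_all add: in_polymatroid_def)
  moreover have "f (S \<union> T) + f (S \<inter> T) \<le> f S + f T" using ST sub by (simp add: submodular_on_def)
  ultimately show ?thesis using ST by linarith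
qed

lemma tight_cover_is_base:
  assumes fN: "finite N" and f0: "f {} = 0" and sub: "submodular_on N f"
    and x: "in_polymatroid f N x" and cover: "\<forall>i\<in>N. \<exists>S\<subseteq>N. i \<in> S \<and> sum x S = f S"
  shows "in_base f N x"
proof -
  have "\<exists>S\<subseteq>N. K \<subseteq> S \<and> sum x S = f S" if "finite K" "K \<subseteq> N" for K
    using that
  proof (induction K rule: finite_induct)
    case empty
    show ?case using f0 by (intro exI[of _ "{}"]) auto
  next
    case (insert a K)
    then obtain S where S: "S \<subseteq> N" "K \<subseteq> S" "sum x S = f S" by auto
    obtain Sa where Sa: "Sa \<subseteq> N" "a \<in> Sa" "sum x Sa = f Sa" using cover insert by auto
    have "sum x (S \<union> Sa) = f (S \<union> Sa)" using tight_union[OF fN x sub S(1) Sa(1) S(3) Sa(3)] .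
    then show ?case using S Sa by (intro exI[of _ "S \<union> Sa"]) auto
  qed
  then obtain S where "S \<subseteq> N" "N \<subseteq> S" "sum x S = f S" using fN by blast
  then have "sum x N = f N" by (metis subset_antisym)
  then show ?thesis using x by (simp add: in_base_def in_polymatroid_def)
qed

lemma polymatroid_dominated_by_base:
  assumes "finite N" "f {} = 0" "submodular_on N f" "in_polymatroid f N r"
  obtains x where "in_base f N x" "\<And>i. r i \<le> x i"
  using polymatroid_raise_all[OF assms(1,4)] tight_cover_is_base[OF assms(1-3)] by blast

section \<open>Unions of events\<close>

lemma (in prob_space) inter_diff_union_events:
  assumes ev: "\<And>i. i \<in> I \<Longrightarrow> A i \<in> events" and "finite K" "K \<subseteq> I" "finite S" "S \<subseteq> I"
  shows "space M \<inter> (\<Inter>k\<in>K. A k) - (\<Union>j\<in>S. A j) \<in> events"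
proof -
  have "(\<Union>j\<in>S. A j) \<in> events" using assms by (intro sets.finite_UN) auto
  moreover have "space M \<inter> (\<Inter>k\<in>K. A k) \<in> events"
  proof (cases "K = {}")
    case False
    then have "(\<Inter>k\<in>K. A k) \<in> events" using assms by (intro sets.finite_INT) auto
    then show ?thesis by simp
  qed simp
  ultimately show ?thesis by blast
qed

lemma (in prob_space) prob_inter_diff_union_indep:
  assumes ind: "indep_events A I" and "finite S" "S \<subseteq> I" "finite K" "K \<subseteq> I" "K \<inter> S = {}"
  shows "prob (space M \<inter> (\<Inter>k\<in>K. A k) - (\<Union>j\<in>S. A j)) =
           (\<Prod>k\<in>K. prob (A k)) * (\<Prod>j\<in>S. 1 - prob (A j))"
proof -
  have ev: "\<And>i. i \<in> I \<Longrightarrow> A i \<in> events" using ind by (auto simp: indep_events_def)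
  show ?thesis
    using assms(2-6)
  proof (induction S arbitrary: K rule: finite_induct)
    case empty
    show ?case
    proof (cases "K = {}")
      case True then show ?thesis by (simp add: prob_space)
    next
      case False
      then obtain k0 where "k0 \<in> K" by blast
      then have "A k0 \<subseteq> space M" using ev[of k0] empty.prems by (auto dest: sets.sets_into_space)
      then have "space M \<inter> (\<Inter>k\<in>K. A k) = (\<Inter>k\<in>K. A k)" using \<open>k0 \<in> K\<close> by blast
      moreover have "prob (\<Inter>k\<in>K. A k) = (\<Prod>k\<in>K. prob (A k))"
        using ind empty.prems False unfolding indep_events_def by blast
      ultimately show ?thesis by simp
    qed
  next
    case (insert a S)
    have aI: "a \<in> I" and aK: "a \<notin> K" using insert.prems by auto
    define X where "X = space M \<inter> (\<Inter>k\<in>K. A k) - (\<Union>j\<in>S. A j)"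
    have X_prob: "prob X = (\<Prod>k\<in>K. prob (A k)) * (\<Prod>j\<in>S. 1 - prob (A j))"
      unfolding X_def by (rule insert.IH) (use insert.prems in auto)
    have "X \<inter> A a = space M \<inter> (\<Inter>k\<in>insert a K. A k) - (\<Union>j\<in>S. A j)" by (auto simp: X_def)
    also have "prob \<dots> = (\<Prod>k\<in>insert a K. prob (A k)) * (\<Prod>j\<in>S. 1 - prob (A j))"
      by (rule insert.IH) (use insert.prems insert.hyps in auto)
    also have "\<dots> = prob (A a) * prob X" using X_prob aK insert.prems by (simp add: mult.assoc)
    finally have XA_prob: "prob (X \<inter> A a) = prob (A a) * prob X" .
    have X_ev: "X \<in> events"
      unfolding X_def using insert.prems insert.hyps ev by (intro inter_diff_union_events) auto
    have "space M \<inter> (\<Inter>k\<in>K. A k) - (\<Union>j\<in>insert a S. A j) = X - A a" by (auto simp: X_def)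
    then have "prob (space M \<inter> (\<Inter>k\<in>K. A k) - (\<Union>j\<in>insert a S. A j)) = prob X - prob (X \<inter> A a)"
      using finite_measure_Diff'[OF X_ev ev[OF aI]] by simp
    also have "\<dots> = (1 - prob (A a)) * prob X" using XA_prob by (simp add: algebra_simps)
    also have "\<dots> = (\<Prod>k\<in>K. prob (A k)) * (\<Prod>j\<in>insert a S. 1 - prob (A j))"
      using X_prob insert.hyps by (simp add: ac_simps)
    finally show ?case .
  qed
qed

lemma (in prob_space) prob_union_indep:
  assumes "indep_events A I" "finite S" "S \<subseteq> I"
  shows "prob (\<Union>j\<in>S. A j) = 1 - (\<Prod>j\<in>S. 1 - prob (A j))"
proof -
  have "(\<Union>j\<in>S. A j) \<in> events"
    using assms by (intro sets.finite_UN) (auto simp: indep_events_def)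
  moreover have "prob (space M - (\<Union>j\<in>S. A j)) = (\<Prod>j\<in>S. 1 - prob (A j))"
    using prob_inter_diff_union_indep[OF assms, of "{}"] by simp
  ultimately show ?thesis using prob_compl by simp
qed

lemma (in prob_space) prob_union_submodular:
  assumes "finite N" "\<And>i. i \<in> N \<Longrightarrow> A i \<in> events"
  shows "submodular_on N (\<lambda>S. prob (\<Union>j\<in>S. A j))"
  unfolding submodular_on_def
proof (intro allI impI)
  fix S T assume ST: "S \<subseteq> N" "T \<subseteq> N"
  define US where "US = (\<Union>j\<in>S. A j)"
  define UT where "UT = (\<Union>j\<in>T. A j)"
  have US: "US \<in> events" "UT \<in> events"
    unfolding US_def UT_def using ST assms finite_subset by (auto intro!: sets.finite_UN)
  have "prob (\<Union>j\<in>S \<inter> T. A j) \<le> prob (US \<inter> UT)"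
    using US by (intro finite_measure_mono) (auto simp: US_def UT_def)
  moreover have "prob (US \<union> UT) = prob US + prob UT - prob (US \<inter> UT)"
    using finite_measure_Union'[OF US] finite_measure_Diff'[OF US(2,1)] by (simp add: Int_commute)
  moreover have "(\<Union>j\<in>S \<union> T. A j) = US \<union> UT" by (simp add: US_def UT_def UN_Un)
  ultimately show "prob (\<Union>j\<in>S \<union> T. A j) + prob (\<Union>j\<in>S \<inter> T. A j)
      \<le> prob (\<Union>j\<in>S. A j) + prob (\<Union>j\<in>T. A j)"
    by (simp add: US_def UT_def)
qed

lemma (in prob_space) prob_first_event:
  assumes ev: "\<And>i. i \<in> {1..n} \<Longrightarrow> A i \<in> events" and i: "i \<in> {1..n}"
  shows "prob (first_event n A \<sigma> i) = marginal (\<lambda>S. prob (\<Union>j\<in>S. A j)) {1..n} \<sigma> i"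
proof -
  define P where "P = {j\<in>{1..n}. \<sigma> j < \<sigma> i}"
  have U: "(\<Union>j\<in>P. A j) \<in> events" using ev by (intro sets.finite_UN) (auto simp: P_def)
  have "first_event n A \<sigma> i = (A i \<union> (\<Union>j\<in>P. A j)) - (\<Union>j\<in>P. A j)"
    by (auto simp: first_event_def P_def)
  then have "prob (first_event n A \<sigma> i) = prob (A i \<union> (\<Union>j\<in>P. A j)) - prob (\<Union>j\<in>P. A j)"
    using U ev[OF i] by (simp add: finite_measure_Diff)
  moreover have "(\<Union>j\<in>insert i P. A j) = A i \<union> (\<Union>j\<in>P. A j)" by auto
  ultimately show ?thesis by (simp add: marginal_def P_def)
qed

section \<open>From orders to permutations\<close>

definition rank_order :: "nat set \<Rightarrow> (nat \<Rightarrow> nat) \<Rightarrow> nat \<Rightarrow> nat" where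
  "rank_order N \<sigma> i = (if i \<in> N then Suc (card {j\<in>N. \<sigma> j < \<sigma> i}) else i)"

lemma rank_order_less:
  assumes "finite N" "i \<in> N" "j \<in> N"
  shows "rank_order N \<sigma> j < rank_order N \<sigma> i \<longleftrightarrow> \<sigma> j < \<sigma> i"
proof (cases "\<sigma> j < \<sigma> i")
  case True
  then have "{k\<in>N. \<sigma> k < \<sigma> j} \<subset> {k\<in>N. \<sigma> k < \<sigma> i}" using assms by auto
  then have "card {k\<in>N. \<sigma> k < \<sigma> j} < card {k\<in>N. \<sigma> k < \<sigma> i}"
    using assms by (intro psubset_card_mono) auto
  then show ?thesis using True assms by (simp add: rank_order_def)
next
  case False
  then have "{k\<in>N. \<sigma> k < \<sigma> i} \<subseteq> {k\<in>N. \<sigma> k < \<sigma> j}" by auto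
  then have "card {k\<in>N. \<sigma> k < \<sigma> i} \<le> card {k\<in>N. \<sigma> k < \<sigma> j}" using assms by (intro card_mono) auto
  then show ?thesis using False assms by (simp add: rank_order_def)
qed

lemma rank_order_predecessors:
  "finite N \<Longrightarrow> i \<in> N \<Longrightarrow> {j\<in>N. rank_order N \<sigma> j < rank_order N \<sigma> i} = {j\<in>N. \<sigma> j < \<sigma> i}"
  by (rule set_eqI) (use rank_order_less[of N i _ \<sigma>] in blast)

lemma rank_order_permutes:
  assumes inj: "inj_on \<sigma> {1..n}"
  shows "rank_order {1..n} \<sigma> permutes {1..n}"
proof (rule bij_imp_permutes)
  let ?N = "{1..n::nat}"
  have inj_rank: "inj_on (rank_order ?N \<sigma>) ?N"
  proof (rule inj_onI)
    fix i j assume ij: "i \<in> ?N" "j \<in> ?N" "rank_order ?N \<sigma> i = rank_order ?N \<sigma> j"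
    then have "\<not> \<sigma> j < \<sigma> i" "\<not> \<sigma> i < \<sigma> j"
      using rank_order_less[of ?N i j \<sigma>] rank_order_less[of ?N j i \<sigma>] by auto
    then show "i = j" using inj_onD[OF inj _ ij(1,2)] by simp
  qed
  have "rank_order ?N \<sigma> ` ?N \<subseteq> ?N"
  proof
    fix y assume "y \<in> rank_order ?N \<sigma> ` ?N"
    then obtain i where i: "i \<in> ?N" "y = rank_order ?N \<sigma> i" by blast
    have "{j\<in>?N. \<sigma> j < \<sigma> i} \<subseteq> ?N - {i}" by auto
    then have "card {j\<in>?N. \<sigma> j < \<sigma> i} \<le> card (?N - {i})" by (intro card_mono) auto
    also have "\<dots> = n - 1" using i by simp
    finally have "card {j\<in>?N. \<sigma> j < \<sigma> i} \<le> n - 1" .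
    moreover have "1 \<le> n" using i by simp
    ultimately have "Suc (card {j\<in>?N. \<sigma> j < \<sigma> i}) \<le> n" by linarith
    then show "y \<in> ?N" using i by (simp add: rank_order_def)
  qed
  then have "rank_order ?N \<sigma> ` ?N = ?N" using endo_inj_surj[OF _ _ inj_rank] by simp
  then show "bij_betw (rank_order ?N \<sigma>) ?N ?N" using inj_rank by (simp add: bij_betw_def)
qed (auto simp: rank_order_def)

lemma permutation_mixture:
  assumes D0: "marginal_mixture f {1..n} x D0" and T: "T \<subseteq> {1..n}"
    and first: "\<forall>\<sigma>\<in>set_pmf D0. \<forall>i\<in>T. \<forall>j\<in>{1..n}-T. \<sigma> i < \<sigma> j"
  obtains D :: "(nat \<Rightarrow> nat) pmf" where "\<forall>\<sigma>\<in>set_pmf D. \<sigma> permutes {1..n}"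
    "\<forall>i\<in>{1..n}. measure_pmf.expectation D (\<lambda>\<sigma>. marginal f {1..n} \<sigma> i) = x i"
    "\<forall>\<sigma>\<in>set_pmf D. \<forall>i\<in>T. \<forall>j\<in>{1..n}-T. \<sigma> i < \<sigma> j"
proof
  let ?D = "map_pmf (rank_order {1..n}) D0"
  show "\<forall>\<sigma>\<in>set_pmf ?D. \<sigma> permutes {1..n}"
    using D0 rank_order_permutes by (auto simp: marginal_mixture_def)
  have "marginal f {1..n} (rank_order {1..n} \<sigma>) i = marginal f {1..n} \<sigma> i" if "i \<in> {1..n}" for \<sigma> i
    unfolding marginal_def rank_order_predecessors[OF finite_atLeastAtMost that] ..
  then show "\<forall>i\<in>{1..n}. measure_pmf.expectation ?D (\<lambda>\<sigma>. marginal f {1..n} \<sigma> i) = x i"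
    using D0 by (simp add: marginal_mixture_def)
  show "\<forall>\<sigma>\<in>set_pmf ?D. \<forall>i\<in>T. \<forall>j\<in>{1..n}-T. \<sigma> i < \<sigma> j"
  proof (intro ballI)
    fix \<sigma> i j assume "\<sigma> \<in> set_pmf ?D" and ij: "i \<in> T" "j \<in> {1..n} - T"
    then obtain \<tau> where "\<tau> \<in> set_pmf D0" "\<sigma> = rank_order {1..n} \<tau>" by auto
    moreover have "i \<in> {1..n}" using ij T by blast
    ultimately show "\<sigma> i < \<sigma> j"
      using first ij rank_order_less[of "{1..n}" j i \<tau>] by auto
  qed
qed

theorem claim2:
  fixes M :: "'a measure" and A :: "nat \<Rightarrow> 'a set" and p r :: "nat \<Rightarrow> real"
    and n :: nat and S0 :: "nat set"
  assumes "prob_space M"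
    and "\<And>i. i \<in> {1..n} \<Longrightarrow> A i \<in> sets M"
    and "prob_space.indep_events M A {1..n}"
    and "\<And>i. i \<in> {1..n} \<Longrightarrow> p i = measure M (A i)"
    and "\<And>i. i \<in> {1..n} \<Longrightarrow> 0 < p i \<and> p i < 1"
    and "\<And>i. i \<in> {1..n} \<Longrightarrow> r i \<ge> 0"
    and "\<And>S. S \<subseteq> {1..n} \<Longrightarrow> (\<Sum>i\<in>S. r i) + (\<Prod>i\<in>S. 1 - p i) \<le> 1"
    and "S0 \<subseteq> {1..n}"
    and "(\<Sum>i\<in>S0. r i) + (\<Prod>i\<in>S0. 1 - p i) = 1"
  shows "\<exists>D :: (nat \<Rightarrow> nat) pmf.
           (\<forall>\<sigma> \<in> set_pmf D. \<sigma> permutes {1..n}) \<and>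
           (\<forall>i \<in> {1..n}. measure_pmf.expectation D (\<lambda>\<sigma>. measure M (first_event n A \<sigma> i)) \<ge> r i) \<and>
           (\<forall>\<sigma> \<in> set_pmf D. \<forall>i \<in> S0. \<forall>j \<in> {1..n} - S0. \<sigma> i < \<sigma> j)"
proof -
  interpret P: prob_space M by fact
  define f where "f = (\<lambda>S. P.prob (\<Union>j\<in>S. A j))"
  have f_prod: "f S = 1 - (\<Prod>i\<in>S. 1 - p i)" if "S \<subseteq> {1..n}" for S
    using P.prob_union_indep[OF assms(3) finite_subset[OF that] that] that assms(4)
    by (auto simp: f_def subset_iff intro!: prod.cong)
  have "sum r S \<le> f S" if "S \<subseteq> {1..n}" for S using assms(7)[OF that] f_prod[OF that] by simp
  then have "in_polymatroid f {1..n} r" by (simp add: in_polymatroid_def)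
  moreover have "submodular_on {1..n} f" unfolding f_def by (rule P.prob_union_submodular) (use assms(2) in auto)
  ultimately obtain x where x: "in_base f {1..n} x" "\<And>i. r i \<le> x i"
    using polymatroid_dominated_by_base[of "{1..n}" f] by (auto simp: f_def)
  have "sum r S0 \<le> sum x S0" "sum x S0 \<le> f S0" "sum r S0 = f S0"
    using x assms(8,9) f_prod[OF assms(8)] by (auto intro: sum_mono simp: in_base_def)
  then have "sum x S0 = f S0" by linarith
  then obtain D0 where "marginal_mixture f {1..n} x D0"
      "\<forall>\<sigma>\<in>set_pmf D0. \<forall>i\<in>S0. \<forall>j\<in>{1..n}-S0. \<sigma> i < \<sigma> j"
    using tight_set_first_mixture[OF _ _ x(1) assms(8)] by (auto simp: f_def)
  then obtain D where D: "\<forall>\<sigma>\<in>set_pmf D. \<sigma> permutes {1..n}"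
      "\<forall>i\<in>{1..n}. measure_pmf.expectation D (\<lambda>\<sigma>. marginal f {1..n} \<sigma> i) = x i"
      "\<forall>\<sigma>\<in>set_pmf D. \<forall>i\<in>S0. \<forall>j\<in>{1..n}-S0. \<sigma> i < \<sigma> j"
    using permutation_mixture assms(8) by blast
  have "measure M (first_event n A \<sigma> i) = marginal f {1..n} \<sigma> i" if "i \<in> {1..n}" for \<sigma> i
    unfolding f_def using P.prob_first_event[OF assms(2) that] by simp
  then show ?thesis using D x(2) by (intro exI[of _ D]) auto
qed
end
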